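(* If $T:\mathrm{PSym}(3)\to\mathrm{Sym}(3)$ satisfies Axioms (A0.1), (A0.2), (A0.3) and (A3), then it also satisfies Axioms (A1) and (A2).
   Context: $\mathrm{Sym}(3)$: real symmetric $3\times3$ matrices; $\mathrm{PSym}(3)$: symmetric positive definite ones; $\mathbb 1$: identity; $\mathrm{O}(3)$: orthogonal group; coaxial means commuting. Axiom (A0.1): $T$ continuous. Axiom (A0.2): $T(U)=0$ iff $U=\mathbb 1$. Axiom (A0.3): $T(Q^TUQ)=Q^TT(U)Q$ for all $Q\in\mathrm O(3)$, $U\in\mathrm{PSym}(3)$. Axiom (A1): for every $\alpha>0$ there is $s\in\mathbb R$ such that for all $U\in\mathrm{PSym}(3)$: $U=\mathrm{diag}(\alpha,\alpha^{-1},1)$ iff $T(U)=\mathrm{diag}(s,-s,0)$. Axiom (A2): for every $\lambda>0$ there is $a\in\mathbb R$ such that for all $U\in\mathrm{PSym}(3)$: $U=\lambda\mathbb 1$ iff $T(U)=a\mathbb 1$. Axiom (A3): $T(U_1U_2)=T(U_1)+T(U_2)$ for all coaxial $U_1,U_2\in\mathrm{PSym}(3)$. *)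

theory Defs
  imports "HOL-Analysis.Analysis"
begin

definition Sym3 :: "(real^3^3) set" where
  "Sym3 = {A. transpose A = A}"

definition PSym3 :: "(real^3^3) set" where
  "PSym3 = {A. transpose A = A \<and> (\<forall>x::real^3. x \<noteq> 0 \<longrightarrow> x \<bullet> (A *v x) > 0)}"

text \<open>Diagonal matrix diag(a,b,c); the indices of type 3 are 1, 2, 3 (= 0 mod 3).\<close>
definition diag3 :: "real \<Rightarrow> real \<Rightarrow> real \<Rightarrow> real^3^3" where
  "diag3 a b c = (\<chi> i j. if i = j then (if i = 1 then a else if i = 2 then b else c) else 0)"

end

theory Submission
  imports Defs
begin

text \<open>
  By isotropy, the sign changes diag(\<plusminus>1,\<plusminus>1,\<plusminus>1), which fix every diagonal matrix, force T
  to map positive diagonal matrices to diagonal ones, and permutation matrices show that T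
  commutes with permuting the diagonal entries. Additivity on commuting arguments together with
  T U = 0 \<longleftrightarrow> U = 1 makes T injective on positive diagonal matrices. By the spectral theorem
  every U is orthogonally conjugate to a positive diagonal matrix, so U commutes with T U.
  For (A2), T(\<lambda>1) is diagonal and invariant under permutations, hence scalar, and T U = T(\<lambda>1)
  gives the same value on the diagonal form of U. For (A1), T of diag(\<alpha>,\<alpha>\<inverse>,1) and of its
  swap diag(\<alpha>\<inverse>,\<alpha>,1) add up to T 1 = 0, so it has the form diag(s,-s,0); if s \<noteq> 0 its
  eigenvalues are distinct and any U with T U = diag(s,-s,0) is diagonal.
\<close>

lemma symmetric_matrix_inner_commute:
  fixes A :: "real^'n^'n"
  assumes "transpose A = A"
  shows "x \<bullet> (A *v y) = y \<bullet> (A *v x)"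
proof -
  have "x \<bullet> (A *v y) = (x v* A) \<bullet> y" by (simp add: dot_lmul_matrix)
  also have "x v* A = A *v x" by (metis assms vector_transpose_matrix)
  finally show ?thesis by (simp add: inner_commute)
qed

lemma symmetric_matrix_eigenvector_orthogonal_invariant:
  fixes A :: "real^'n^'n"
  assumes "transpose A = A" "A *v v = \<mu> *\<^sub>R v" "v \<bullet> x = 0"
  shows "v \<bullet> (A *v x) = 0"
  using symmetric_matrix_inner_commute[OF assms(1), of v x] assms(2,3) by (simp add: inner_commute)

lemma linear_coeff_zero_if_quadratic_nonpos:
  fixes c d :: real
  assumes "\<And>t. 2 * t * c + t\<^sup>2 * d \<le> 0"
  shows "c = 0"
proof (rule ccontr)
  assume "c \<noteq> 0"
  define e where "e = \<bar>d\<bar> + 1"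
  have "e > 0" "2 * e + d > 0" by (auto simp: e_def)
  then have "0 < c\<^sup>2 * (2 * e + d) / e\<^sup>2" using \<open>c \<noteq> 0\<close> by simp
  also have "\<dots> = 2 * (c / e) * c + (c / e)\<^sup>2 * d"
    using \<open>e > 0\<close> by (simp add: field_simps power2_eq_square)
  also have "\<dots> \<le> 0" by (rule assms)
  finally show False by simp
qed

lemma rayleigh_quotient_attains_max:
  fixes A :: "real^'n^'n"
  assumes "subspace S" "S \<noteq> {0}"
  obtains v where "v \<in> S" "norm v = 1"
    "\<And>x. x \<in> S \<Longrightarrow> x \<bullet> (A *v x) \<le> (v \<bullet> (A *v v)) * (x \<bullet> x)"
proof -
  define K where "K = S \<inter> sphere 0 1"
  obtain x0 where "x0 \<in> S" "x0 \<noteq> 0" using assms subspace_0 by blast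
  then have "x0 /\<^sub>R norm x0 \<in> K" unfolding K_def using assms by (simp add: subspace_scale)
  moreover have "compact K" unfolding K_def
    by (simp add: closed_Int_compact closed_subspace assms)
  moreover have "continuous_on K (\<lambda>x. x \<bullet> (A *v x))"
    by (intro continuous_intros linear_continuous_on) auto
  ultimately obtain v where v: "v \<in> K" and vmax: "\<And>y. y \<in> K \<Longrightarrow> y \<bullet> (A *v y) \<le> v \<bullet> (A *v v)"
    using continuous_attains_sup[of K] by blast
  have "x \<bullet> (A *v x) \<le> (v \<bullet> (A *v v)) * (x \<bullet> x)" if "x \<in> S" for x
  proof (cases "x = 0")
    case False
    then have "x /\<^sub>R norm x \<in> K" unfolding K_def using that assms by (simp add: subspace_scale)
    from vmax[OF this] show ?thesis using False
      by (simp add: matrix_vector_mult_scaleR field_simps power2_norm_eq_inner[symmetric]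
          power2_eq_square mult_ac)
  qed simp
  with v that show ?thesis by (auto simp: K_def)
qed

lemma symmetric_matrix_eigenvector_in_invariant_subspace:
  fixes A :: "real^'n^'n"
  assumes sym: "transpose A = A" and S: "subspace S" "S \<noteq> {0}"
    and invariant: "\<And>x. x \<in> S \<Longrightarrow> A *v x \<in> S"
  obtains v \<mu> where "v \<in> S" "norm v = 1" "A *v v = \<mu> *\<^sub>R v"
proof -
  obtain v where v: "v \<in> S" "norm v = 1"
    and vmax: "\<And>x. x \<in> S \<Longrightarrow> x \<bullet> (A *v x) \<le> (v \<bullet> (A *v v)) * (x \<bullet> x)"
    using rayleigh_quotient_attains_max[OF S] by blast
  define \<mu> where "\<mu> = v \<bullet> (A *v v)"
  have vv: "v \<bullet> v = 1" using v by (simp add: norm_eq_1)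
  \<comment> \<open>first variation of the Rayleigh quotient at its maximiser v in direction w\<close>
  have "w \<bullet> (A *v v - \<mu> *\<^sub>R v) = 0" if "w \<in> S" for w
  proof (rule linear_coeff_zero_if_quadratic_nonpos)
    fix t
    have "v + t *\<^sub>R w \<in> S" using v that S by (simp add: subspace_add subspace_scale)
    from vmax[OF this] show "2 * t * (w \<bullet> (A *v v - \<mu> *\<^sub>R v)) + t\<^sup>2 * (w \<bullet> (A *v w) - \<mu> * (w \<bullet> w)) \<le> 0"
      using symmetric_matrix_inner_commute[OF sym, of v w]
      by (simp add: matrix_vector_right_distrib matrix_vector_mult_scaleR inner_add_left inner_add_right
          inner_diff_right vv inner_commute[of v w] power2_eq_square algebra_simps \<mu>_def[symmetric])
  qed
  moreover have "A *v v - \<mu> *\<^sub>R v \<in> S" using invariant v S by (simp add: subspace_diff subspace_scale)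
  ultimately have "A *v v = \<mu> *\<^sub>R v" by (metis inner_eq_zero_iff eq_iff_diff_eq_0)
  with v that show ?thesis by blast
qed

lemma matrix_mult_transpose_nth:
  fixes Q M :: "real^'n^'n"
  shows "(Q ** M ** transpose Q) $ i $ j = Q $ i \<bullet> (M *v Q $ j)"
proof -
  have "(Q ** M ** transpose Q) $ i $ j = (\<Sum>l\<in>UNIV. \<Sum>k\<in>UNIV. Q$i$k * M$k$l * Q$j$l)"
    by (simp add: matrix_matrix_mult_def transpose_def sum_distrib_right)
  also have "\<dots> = (\<Sum>k\<in>UNIV. \<Sum>l\<in>UNIV. Q$i$k * M$k$l * Q$j$l)"
    by (rule sum.swap)
  also have "\<dots> = Q $ i \<bullet> (M *v Q $ j)"
    by (simp add: matrix_vector_mult_def inner_vec_def sum_distrib_left mult.assoc)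
  finally show ?thesis .
qed

lemma matrix_mult_transpose_self_nth:
  fixes Q :: "real^'n^'n"
  shows "(Q ** transpose Q) $ i $ j = Q $ i \<bullet> Q $ j"
  by (simp add: matrix_matrix_mult_def inner_vec_def transpose_def)

lemma mat3_eq_iff: "(A::real^3^3) = B \<longleftrightarrow>
   A$1$1 = B$1$1 \<and> A$1$2 = B$1$2 \<and> A$1$3 = B$1$3 \<and>
   A$2$1 = B$2$1 \<and> A$2$2 = B$2$2 \<and> A$2$3 = B$2$3 \<and>
   A$3$1 = B$3$1 \<and> A$3$2 = B$3$2 \<and> A$3$3 = B$3$3"
  by (auto simp: vec_eq_iff forall_3)

lemma mat3_mult_nth: "((A::real^3^3) ** B) $ i $ j = A$i$1 * B$1$j + A$i$2 * B$2$j + A$i$3 * B$3$j"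
  by (simp add: matrix_matrix_mult_def sum_3)

lemma diag3_nth [simp]:
  "diag3 a b c $ 1 $ 1 = a" "diag3 a b c $ 2 $ 2 = b" "diag3 a b c $ 3 $ 3 = c"
  "diag3 a b c $ 1 $ 2 = 0" "diag3 a b c $ 1 $ 3 = 0" "diag3 a b c $ 2 $ 1 = 0"
  "diag3 a b c $ 2 $ 3 = 0" "diag3 a b c $ 3 $ 1 = 0" "diag3 a b c $ 3 $ 2 = 0"
  by (simp_all add: diag3_def)

lemma diag3_mult: "diag3 a b c ** diag3 a' b' c' = diag3 (a * a') (b * b') (c * c')"
  by (simp add: mat3_eq_iff mat3_mult_nth)

lemma diag3_add: "diag3 a b c + diag3 a' b' c' = diag3 (a + a') (b + b') (c + c')"
  by (simp add: mat3_eq_iff)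

lemma diag3_eq_iff: "diag3 a b c = diag3 a' b' c' \<longleftrightarrow> a = a' \<and> b = b' \<and> c = c'"
  by (simp add: mat3_eq_iff)

lemma diag3_zero: "diag3 0 0 0 = 0"
  by (simp add: mat3_eq_iff)

lemma diag3_scalar: "diag3 a a a = a *\<^sub>R mat 1"
  by (simp add: mat3_eq_iff mat_def)

lemma diag3_one: "diag3 1 1 1 = mat 1"
  using diag3_scalar[of 1] by simp

lemma transpose_diag3 [simp]: "transpose (diag3 a b c) = diag3 a b c"
  by (simp add: mat3_eq_iff transpose_def)

lemma diag3_mult_commute: "diag3 a b c ** diag3 a' b' c' = diag3 a' b' c' ** diag3 a b c"
  by (simp add: diag3_mult mult.commute)

lemma orthogonal_matrix_diag3:
  assumes "a * a = 1" "b * b = 1" "c * c = 1"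
  shows "orthogonal_matrix (diag3 a b c)"
  using assms by (simp add: orthogonal_matrix diag3_mult diag3_one)

lemma diagonal_if_sign_change_invariant:
  fixes M :: "real^3^3"
  assumes "transpose (diag3 (-1) 1 1) ** M ** diag3 (-1) 1 1 = M"
    and "transpose (diag3 1 (-1) 1) ** M ** diag3 1 (-1) 1 = M"
  shows "M = diag3 (M$1$1) (M$2$2) (M$3$3)"
  using assms by (simp add: mat3_eq_iff mat3_mult_nth)

lemma diagonal_if_commute_diag3:
  fixes U :: "real^3^3"
  assumes "U ** diag3 a b c = diag3 a b c ** U" "a \<noteq> b" "a \<noteq> c" "b \<noteq> c"
  shows "U = diag3 (U$1$1) (U$2$2) (U$3$3)"
proof -
  have "(U ** diag3 a b c) $ i $ j = (diag3 a b c ** U) $ i $ j" for i j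
    using assms(1) by simp
  from this[of 1 2] this[of 1 3] this[of 2 1] this[of 2 3] this[of 3 1] this[of 3 2] assms(2-4)
  show ?thesis by (auto simp: mat3_eq_iff mat3_mult_nth)
qed

definition swap12 :: "real^3^3" where
  "swap12 = (\<chi> i j. if (i = 1 \<and> j = 2) \<or> (i = 2 \<and> j = 1) \<or> (i = 3 \<and> j = 3) then 1 else 0)"

definition swap23 :: "real^3^3" where
  "swap23 = (\<chi> i j. if (i = 1 \<and> j = 1) \<or> (i = 2 \<and> j = 3) \<or> (i = 3 \<and> j = 2) then 1 else 0)"

lemma orthogonal_matrix_swap12: "orthogonal_matrix swap12"
  by (simp add: orthogonal_matrix mat3_eq_iff mat3_mult_nth swap12_def transpose_def mat_def)

lemma orthogonal_matrix_swap23: "orthogonal_matrix swap23"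
  by (simp add: orthogonal_matrix mat3_eq_iff mat3_mult_nth swap23_def transpose_def mat_def)

lemma swap12_conj_diag3: "transpose swap12 ** diag3 a b c ** swap12 = diag3 b a c"
  by (simp add: mat3_eq_iff mat3_mult_nth swap12_def transpose_def)

lemma swap23_conj_diag3: "transpose swap23 ** diag3 a b c ** swap23 = diag3 a c b"
  by (simp add: mat3_eq_iff mat3_mult_nth swap23_def transpose_def)

lemma orthogonal_to_two_vectors_exists:
  fixes v w :: "real^3"
  obtains z where "z \<noteq> 0" "v \<bullet> z = 0" "w \<bullet> z = 0"
proof -
  have "dim {v, w} \<le> card {v, w}" by (rule dim_le_card') simp
  also have "\<dots> < DIM(real^3)" by (simp add: card_insert_if)
  finally obtain z where "z \<noteq> 0" "\<And>y. y \<in> span {v, w} \<Longrightarrow> orthogonal z y"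
    using orthogonal_to_subspace_exists by blast
  moreover have "v \<in> span {v, w}" "w \<in> span {v, w}" by (simp_all add: span_base)
  ultimately show ?thesis using that by (metis orthogonal_def inner_commute)
qed

lemma symmetric_matrix3_diagonalizable:
  fixes U :: "real^3^3"
  assumes sym: "transpose U = U"
  obtains Q a b c where "orthogonal_matrix Q" "U = transpose Q ** diag3 a b c ** Q"
proof -
  have "(UNIV :: (real^3) set) \<noteq> {0}"
    by (metis UNIV_I singletonD vec_eq_iff zero_index one_index zero_neq_one)
  then obtain v1 \<mu>1 where v1: "norm v1 = 1" "U *v v1 = \<mu>1 *\<^sub>R v1"
    using symmetric_matrix_eigenvector_in_invariant_subspace[OF sym subspace_UNIV] by auto
  define S2 where "S2 = {x. v1 \<bullet> x = 0}"
  obtain z where "z \<noteq> 0" "v1 \<bullet> z = 0"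
    using orthogonal_to_two_vectors_exists[of v1 v1] by metis
  then have "S2 \<noteq> {0}" unfolding S2_def by auto
  moreover have "U *v x \<in> S2" if "x \<in> S2" for x
    using symmetric_matrix_eigenvector_orthogonal_invariant[OF sym v1(2)] that by (simp add: S2_def)
  moreover have "subspace S2" unfolding S2_def by (rule subspace_hyperplane)
  ultimately obtain v2 \<mu>2 where v2: "v2 \<in> S2" "norm v2 = 1" "U *v v2 = \<mu>2 *\<^sub>R v2"
    using symmetric_matrix_eigenvector_in_invariant_subspace[OF sym, of S2] by metis
  define S3 where "S3 = {x. v1 \<bullet> x = 0 \<and> v2 \<bullet> x = 0}"
  obtain z where "z \<noteq> 0" "v1 \<bullet> z = 0" "v2 \<bullet> z = 0"
    using orthogonal_to_two_vectors_exists[of v1 v2] by metis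
  then have "S3 \<noteq> {0}" unfolding S3_def by auto
  moreover have "U *v x \<in> S3" if "x \<in> S3" for x
    using symmetric_matrix_eigenvector_orthogonal_invariant[OF sym v1(2)]
      symmetric_matrix_eigenvector_orthogonal_invariant[OF sym v2(3)] that by (simp add: S3_def)
  moreover have "subspace S3"
    unfolding S3_def Collect_conj_eq by (intro subspace_inter subspace_hyperplane)
  ultimately obtain v3 \<mu>3 where v3: "v3 \<in> S3" "norm v3 = 1" "U *v v3 = \<mu>3 *\<^sub>R v3"
    using symmetric_matrix_eigenvector_in_invariant_subspace[OF sym, of S3] by metis
  define Q :: "real^3^3" where "Q = vector [v1, v2, v3]"
  have Q: "Q$1 = v1" "Q$2 = v2" "Q$3 = v3" by (simp_all add: Q_def)
  have "Q ** transpose Q = mat 1"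
    unfolding vec_eq_iff forall_3 matrix_mult_transpose_self_nth Q
    using v1 v2 v3 by (simp add: S2_def S3_def mat_def inner_commute norm_eq_1)
  then have orth: "orthogonal_matrix Q"
    by (simp add: orthogonal_matrix_def matrix_left_right_inverse)
  have "Q ** U ** transpose Q = diag3 \<mu>1 \<mu>2 \<mu>3"
    unfolding vec_eq_iff forall_3 matrix_mult_transpose_nth Q
    using v1 v2 v3 by (simp add: S2_def S3_def diag3_def inner_commute norm_eq_1)
  then have "transpose Q ** diag3 \<mu>1 \<mu>2 \<mu>3 ** Q = transpose Q ** (Q ** U ** transpose Q) ** Q"
    by simp
  also have "\<dots> = (transpose Q ** Q) ** U ** (transpose Q ** Q)"
    by (simp add: matrix_mul_assoc)
  also have "\<dots> = U" using orth by (simp add: orthogonal_matrix_def)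
  finally show ?thesis using orth that by metis
qed

lemma diag3_in_PSym3:
  assumes "a > 0" "b > 0" "c > 0"
  shows "diag3 a b c \<in> PSym3"
proof -
  have "x \<bullet> (diag3 a b c *v x) > 0" if "x \<noteq> 0" for x :: "real^3"
  proof -
    have "x$1 \<noteq> 0 \<or> x$2 \<noteq> 0 \<or> x$3 \<noteq> 0" using that by (auto simp: vec_eq_iff forall_3)
    then have "a * (x$1)\<^sup>2 > 0 \<or> b * (x$2)\<^sup>2 > 0 \<or> c * (x$3)\<^sup>2 > 0" using assms by auto
    moreover have "a * (x$1)\<^sup>2 \<ge> 0" "b * (x$2)\<^sup>2 \<ge> 0" "c * (x$3)\<^sup>2 \<ge> 0" using assms by auto
    ultimately have "a * (x$1)\<^sup>2 + b * (x$2)\<^sup>2 + c * (x$3)\<^sup>2 > 0" by linarith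
    then show ?thesis
      by (simp add: inner_vec_def matrix_vector_mult_def sum_3 diag3_def power2_eq_square mult_ac)
  qed
  then show ?thesis by (simp add: PSym3_def)
qed

lemma PSym3_diagonal_pos:
  assumes "U \<in> PSym3"
  shows "U$i$i > 0"
proof -
  have "axis i 1 \<bullet> (U *v axis i (1::real)) > 0" using assms by (simp add: PSym3_def axis_eq_0_iff)
  moreover have "axis i 1 \<bullet> (U *v axis i (1::real)) = U$i$i"
    by (simp add: inner_axis' matrix_vector_mult_basis column_def)
  ultimately show ?thesis by simp
qed

lemma PSym3_orthogonal_conj:
  assumes Q: "orthogonal_matrix Q" and U: "U \<in> PSym3"
  shows "transpose Q ** U ** Q \<in> PSym3"
proof -
  have "transpose (transpose Q ** U ** Q) = transpose Q ** U ** Q"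
    using U by (simp add: PSym3_def matrix_transpose_mul matrix_mul_assoc)
  moreover have "x \<bullet> ((transpose Q ** U ** Q) *v x) > 0" if "x \<noteq> 0" for x
  proof -
    have "transpose Q *v (Q *v x) = x"
      using Q by (simp add: matrix_vector_mul_assoc orthogonal_matrix)
    then have "Q *v x \<noteq> 0" using that by auto
    then have "(Q *v x) \<bullet> (U *v (Q *v x)) > 0" using U by (simp add: PSym3_def)
    moreover have "x \<bullet> ((transpose Q ** U ** Q) *v x) = (x v* transpose Q) \<bullet> (U *v (Q *v x))"
      by (simp only: dot_lmul_matrix matrix_vector_mul_assoc matrix_mul_assoc)
    ultimately show ?thesis by simp
  qed
  ultimately show ?thesis by (simp add: PSym3_def)
qed

lemma PSym3_spectral:
  assumes "U \<in> PSym3"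
  obtains Q a b c where "orthogonal_matrix Q" "U = transpose Q ** diag3 a b c ** Q"
    "a > 0" "b > 0" "c > 0"
proof -
  obtain Q a b c where Q: "orthogonal_matrix Q" and U: "U = transpose Q ** diag3 a b c ** Q"
    using symmetric_matrix3_diagonalizable assms unfolding PSym3_def by blast
  have "transpose (transpose Q) ** U ** transpose Q = (Q ** transpose Q) ** diag3 a b c ** (Q ** transpose Q)"
    unfolding U by (simp add: matrix_mul_assoc)
  also have "\<dots> = diag3 a b c" using Q by (simp add: orthogonal_matrix_def)
  finally have "diag3 a b c \<in> PSym3"
    using PSym3_orthogonal_conj[of "transpose Q" U] Q assms by simp
  from PSym3_diagonal_pos[OF this, of 1] PSym3_diagonal_pos[OF this, of 2] PSym3_diagonal_pos[OF this, of 3]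
  show ?thesis using that Q U by simp
qed

locale isotropic_additive_strain =
  fixes T :: "real^3^3 \<Rightarrow> real^3^3"
  assumes zero_iff_one: "U \<in> PSym3 \<Longrightarrow> T U = 0 \<longleftrightarrow> U = mat 1"
    and isotropic: "orthogonal_matrix Q \<Longrightarrow> U \<in> PSym3 \<Longrightarrow>
      T (transpose Q ** U ** Q) = transpose Q ** T U ** Q"
    and additive: "U1 \<in> PSym3 \<Longrightarrow> U2 \<in> PSym3 \<Longrightarrow> U1 ** U2 = U2 ** U1 \<Longrightarrow>
      T (U1 ** U2) = T U1 + T U2"
begin

lemma T_one: "T (mat 1) = 0"
  using zero_iff_one diag3_in_PSym3[of 1 1 1] by (simp add: diag3_one)

lemma T_diag3_inj:
  assumes pos: "x > 0" "y > 0" "z > 0" "x' > 0" "y' > 0" "z' > 0"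
    and eq: "T (diag3 x y z) = T (diag3 x' y' z')"
  shows "x = x' \<and> y = y' \<and> z = z'"
proof -
  define W where "W = diag3 (x / x') (y / y') (z / z')"
  have W: "W \<in> PSym3" unfolding W_def using pos by (intro diag3_in_PSym3) auto
  have D': "diag3 x' y' z' \<in> PSym3" using pos by (intro diag3_in_PSym3)
  have "W ** diag3 x' y' z' = diag3 x y z" unfolding W_def diag3_mult using pos by simp
  then have "T (diag3 x y z) = T W + T (diag3 x' y' z')"
    using additive[OF W D'] by (metis W_def diag3_mult_commute)
  then have "W = mat 1" using eq zero_iff_one[OF W] by simp
  then show ?thesis unfolding W_def diag3_one[symmetric] diag3_eq_iff using pos by simp
qed

lemma T_diag3_diagonal:
  assumes pos: "x > 0" "y > 0" "z > 0"
  obtains p q r where "T (diag3 x y z) = diag3 p q r"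
proof -
  have D: "diag3 x y z \<in> PSym3" using pos by (rule diag3_in_PSym3)
  have sign_invariant: "transpose S ** T (diag3 x y z) ** S = T (diag3 x y z)"
    if "S \<in> {diag3 (-1) 1 1, diag3 1 (-1) 1}" for S
  proof -
    have "orthogonal_matrix S" using that by (auto intro: orthogonal_matrix_diag3)
    moreover have "transpose S ** diag3 x y z ** S = diag3 x y z"
      using that by (auto simp: diag3_mult)
    ultimately show ?thesis using isotropic[OF _ D] by metis
  qed
  show ?thesis
    by (rule that, rule diagonal_if_sign_change_invariant; rule sign_invariant) simp_all
qed

lemma T_diag3_swap12:
  assumes "x > 0" "y > 0" "z > 0" "T (diag3 x y z) = diag3 p q r"
  shows "T (diag3 y x z) = diag3 q p r"
  using isotropic[OF orthogonal_matrix_swap12 diag3_in_PSym3[OF assms(1-3)]] assms(4)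
  by (simp add: swap12_conj_diag3)

lemma T_diag3_swap23:
  assumes "x > 0" "y > 0" "z > 0" "T (diag3 x y z) = diag3 p q r"
  shows "T (diag3 x z y) = diag3 p r q"
  using isotropic[OF orthogonal_matrix_swap23 diag3_in_PSym3[OF assms(1-3)]] assms(4)
  by (simp add: swap23_conj_diag3)

lemma commute_T:
  assumes U: "U \<in> PSym3"
  shows "U ** T U = T U ** U"
proof -
  obtain Q a b c where Q: "orthogonal_matrix Q" and U_eq: "U = transpose Q ** diag3 a b c ** Q"
    and pos: "a > 0" "b > 0" "c > 0"
    using PSym3_spectral[OF U] by blast
  obtain p q r where Tp: "T (diag3 a b c) = diag3 p q r" using T_diag3_diagonal[OF pos] by blast
  have TU: "T U = transpose Q ** diag3 p q r ** Q"
    using isotropic[OF Q diag3_in_PSym3[OF pos]] U_eq Tp by simp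
  have QQ: "Q ** transpose Q = mat 1" using Q by (simp add: orthogonal_matrix_def)
  have "U ** T U = transpose Q ** (diag3 a b c ** (Q ** transpose Q) ** diag3 p q r) ** Q"
    unfolding TU by (subst U_eq) (simp add: matrix_mul_assoc)
  also have "\<dots> = transpose Q ** (diag3 p q r ** (Q ** transpose Q) ** diag3 a b c) ** Q"
    unfolding QQ by (simp add: diag3_mult_commute)
  also have "\<dots> = T U ** U"
    unfolding TU by (subst U_eq) (simp add: matrix_mul_assoc)
  finally show ?thesis .
qed

lemma T_planar_stretch_iff:
  assumes "\<alpha> > 0"
  shows "\<exists>s. \<forall>U\<in>PSym3. U = diag3 \<alpha> (inverse \<alpha>) 1 \<longleftrightarrow> T U = diag3 s (- s) 0"
proof -
  have pos: "inverse \<alpha> > 0" "(1::real) > 0" using assms by simp_all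
  define D where "D = diag3 \<alpha> (inverse \<alpha>) 1"
  define D' where "D' = diag3 (inverse \<alpha>) \<alpha> 1"
  have D: "D \<in> PSym3" and D': "D' \<in> PSym3"
    unfolding D_def D'_def using assms pos by (auto intro: diag3_in_PSym3)
  obtain p q r where TD: "T D = diag3 p q r"
    using T_diag3_diagonal[OF assms pos] unfolding D_def by blast
  have TD': "T D' = diag3 q p r"
    using T_diag3_swap12[OF assms pos] TD unfolding D_def D'_def by blast
  have "D ** D' = mat 1" "D' ** D = mat 1"
    unfolding D_def D'_def diag3_mult diag3_one[symmetric] using assms by simp_all
  then have "T D + T D' = 0" using additive[OF D D'] T_one by simp
  then have qr: "q = - p" "r = 0"
    unfolding TD TD' diag3_add diag3_zero[symmetric] diag3_eq_iff by auto
  have "U = D" if U: "U \<in> PSym3" and TU: "T U = diag3 p (- p) 0" for U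
  proof (cases "p = 0")
    case True
    then show ?thesis using TU TD qr zero_iff_one[OF U] zero_iff_one[OF D] by (simp add: diag3_zero)
  next
    case False
    have "U ** diag3 p (- p) 0 = diag3 p (- p) 0 ** U" using commute_T[OF U] TU by simp
    then have U_diag: "U = diag3 (U$1$1) (U$2$2) (U$3$3)"
      using diagonal_if_commute_diag3 False by simp
    then have "T (diag3 (U$1$1) (U$2$2) (U$3$3)) = T (diag3 \<alpha> (inverse \<alpha>) 1)"
      using TU TD qr D_def by simp
    then have "U$1$1 = \<alpha> \<and> U$2$2 = inverse \<alpha> \<and> U$3$3 = 1"
      using assms pos PSym3_diagonal_pos[OF U] by (intro T_diag3_inj) auto
    then show ?thesis using U_diag D_def by simp
  qed
  then have "\<forall>U\<in>PSym3. U = D \<longleftrightarrow> T U = diag3 p (- p) 0" using TD qr by auto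
  then show ?thesis unfolding D_def by blast
qed

lemma T_dilation_iff:
  assumes "lam > 0"
  shows "\<exists>a. \<forall>U\<in>PSym3. U = lam *\<^sub>R mat 1 \<longleftrightarrow> T U = a *\<^sub>R mat 1"
proof -
  obtain p q r where TL: "T (diag3 lam lam lam) = diag3 p q r"
    using T_diag3_diagonal[OF assms assms assms] by blast
  have "diag3 p q r = diag3 q p r" "diag3 p q r = diag3 p r q"
    using T_diag3_swap12[OF assms assms assms TL] T_diag3_swap23[OF assms assms assms TL] TL by simp_all
  then have "q = p" "r = p" unfolding diag3_eq_iff by blast+
  then have T_lam: "T (lam *\<^sub>R mat 1) = p *\<^sub>R mat 1"
    using TL by (simp add: diag3_scalar)
  have "U = lam *\<^sub>R mat 1" if U: "U \<in> PSym3" and TU: "T U = p *\<^sub>R mat 1" for U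
  proof -
    obtain Q a b c where Q: "orthogonal_matrix Q" and U_eq: "U = transpose Q ** diag3 a b c ** Q"
      and pos: "a > 0" "b > 0" "c > 0"
      using PSym3_spectral[OF U] by blast
    have QQ: "Q ** transpose Q = mat 1" "transpose Q ** Q = mat 1"
      using Q by (simp_all add: orthogonal_matrix_def)
    have scalar_conj: "P ** (k *\<^sub>R mat 1) ** P' = k *\<^sub>R mat 1"
      if "P ** P' = mat 1" for P P' :: "real^3^3" and k
      using that by (simp add: matrix_scalar_ac scalar_matrix_assoc[symmetric])
    have "T (diag3 a b c) = (Q ** transpose Q) ** T (diag3 a b c) ** (Q ** transpose Q)"
      by (simp add: QQ)
    also have "\<dots> = Q ** (transpose Q ** T (diag3 a b c) ** Q) ** transpose Q"
      by (simp add: matrix_mul_assoc)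
    also have "\<dots> = Q ** T U ** transpose Q"
      using isotropic[OF Q diag3_in_PSym3[OF pos]] U_eq by simp
    also have "\<dots> = T (diag3 lam lam lam)"
      using TU T_lam scalar_conj QQ(1) by (simp add: diag3_scalar)
    finally have "a = lam \<and> b = lam \<and> c = lam" using pos assms by (intro T_diag3_inj) auto
    then show ?thesis
      using U_eq scalar_conj QQ(2) by (simp add: diag3_scalar)
  qed
  then show ?thesis using T_lam by blast
qed

end

theorem mainTheorem8:
  fixes T :: "real^3^3 \<Rightarrow> real^3^3"
  assumes into_Sym: "\<forall>U\<in>PSym3. T U \<in> Sym3"
    and A01: "continuous_on PSym3 T"
    and A02: "\<forall>U\<in>PSym3. T U = 0 \<longleftrightarrow> U = mat 1"
    and A03: "\<forall>Q U. orthogonal_matrix Q \<and> U \<in> PSym3 \<longrightarrow>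
                 T (transpose Q ** U ** Q) = transpose Q ** T U ** Q"
    and A3: "\<forall>U1\<in>PSym3. \<forall>U2\<in>PSym3. U1 ** U2 = U2 ** U1 \<longrightarrow>
                 T (U1 ** U2) = T U1 + T U2"
  shows "(\<forall>\<alpha>::real. \<alpha> > 0 \<longrightarrow> (\<exists>s::real. \<forall>U\<in>PSym3.
            U = diag3 \<alpha> (inverse \<alpha>) 1 \<longleftrightarrow> T U = diag3 s (- s) 0))
       \<and> (\<forall>lam::real. lam > 0 \<longrightarrow> (\<exists>a::real. \<forall>U\<in>PSym3.
            U = lam *\<^sub>R mat 1 \<longleftrightarrow> T U = a *\<^sub>R mat 1))"
proof -
  interpret isotropic_additive_strain T
    using A02 A03 A3 by unfold_locales blast+
  show ?thesis using T_planar_stretch_iff T_dilation_iff by blast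
qed

end
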